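(* Let $\star$ be a star operation on a domain $R$. If every nonzero finitely generated ideal of $R$ is $\star$-basic, then every nonzero finitely generated ideal of $R$ is $\star_f$-basic. In particular, if every nonzero finitely generated ideal of $R$ is $v$-basic, then every nonzero finitely generated ideal of $R$ is $t$-basic.
   Context: A star operation on a domain $R$ with quotient field $K$ is a map $I\mapsto I^\star$ on nonzero fractional ideals with $(aI)^\star=aI^\star$ ($0\ne a\in K$), $R^\star=R$, $I\subseteq I^\star$, $I\subseteq J\Rightarrow I^\star\subseteq J^\star$, $I^{\star\star}=I^\star$. The associated star operation $\star_f$ is $I^{\star_f}=\bigcup J^\star$ over finitely generated subideals $J\subseteq I$. $I_v=(R:(R:I))$ with $(R:I)=\{x\in K:xI\subseteq R\}$, and $t=v_f$. For a nonzero ideal $I$, an ideal $J\subseteq I$ is a $\star$-reduction of $I$ if $(JI^n)^\star=(I^{n+1})^\star$ for some integer $n\ge0$; $I$ is $\star$-basic if every $\star$-reduction $J$ of $I$ satisfies $J^\star=I^\star$. *)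

theory Defs
  imports Main
begin

text \<open>A domain R is modelled as a subring of a field K (type 'k) such that
K is the quotient field of R.  Fractional ideals are R-submodules of K.\<close>

definition domain_with_qf :: "'k::field set \<Rightarrow> bool" where
  "domain_with_qf R \<longleftrightarrow> 0 \<in> R \<and> 1 \<in> R \<and>
     (\<forall>x\<in>R. \<forall>y\<in>R. x + y \<in> R \<and> x - y \<in> R \<and> x * y \<in> R) \<and>
     (\<forall>z. \<exists>a\<in>R. \<exists>b\<in>R. b \<noteq> 0 \<and> z = a / b)"

definition submod :: "'k::field set \<Rightarrow> 'k set \<Rightarrow> bool" where
  "submod R M \<longleftrightarrow> 0 \<in> M \<and> (\<forall>x\<in>M. \<forall>y\<in>M. x + y \<in> M) \<and> (\<forall>r\<in>R. \<forall>x\<in>M. r * x \<in> M)"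

definition frac_ideal :: "'k::field set \<Rightarrow> 'k set \<Rightarrow> bool" where
  "frac_ideal R I \<longleftrightarrow> submod R I \<and> I \<noteq> {0} \<and> (\<exists>d\<in>R. d \<noteq> 0 \<and> (\<forall>x\<in>I. d * x \<in> R))"

definition ideal_of :: "'k::field set \<Rightarrow> 'k set \<Rightarrow> bool" where
  "ideal_of R I \<longleftrightarrow> submod R I \<and> I \<subseteq> R"

definition rspan :: "'k::field set \<Rightarrow> 'k set \<Rightarrow> 'k set" where
  "rspan R S = \<Inter>{M. submod R M \<and> S \<subseteq> M}"

definition fin_gen :: "'k::field set \<Rightarrow> 'k set \<Rightarrow> bool" where
  "fin_gen R I \<longleftrightarrow> (\<exists>F. finite F \<and> I = rspan R F)"

definition ideal_mult :: "'k::field set \<Rightarrow> 'k set \<Rightarrow> 'k set \<Rightarrow> 'k set" where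
  "ideal_mult R I J = rspan R {x * y | x y. x \<in> I \<and> y \<in> J}"

fun ideal_pow :: "'k::field set \<Rightarrow> 'k set \<Rightarrow> nat \<Rightarrow> 'k set" where
  "ideal_pow R I 0 = R"
| "ideal_pow R I (Suc n) = ideal_mult R I (ideal_pow R I n)"

text \<open>Star operation: a map on nonzero fractional ideals (values elsewhere irrelevant).\<close>
definition star_op :: "'k::field set \<Rightarrow> ('k set \<Rightarrow> 'k set) \<Rightarrow> bool" where
  "star_op R st \<longleftrightarrow>
     (\<forall>I. frac_ideal R I \<longrightarrow> frac_ideal R (st I)) \<and>
     (\<forall>I a. frac_ideal R I \<longrightarrow> a \<noteq> 0 \<longrightarrow> st ((\<lambda>x. a * x) ` I) = (\<lambda>x. a * x) ` st I) \<and>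
     st R = R \<and>
     (\<forall>I. frac_ideal R I \<longrightarrow> I \<subseteq> st I) \<and>
     (\<forall>I J. frac_ideal R I \<longrightarrow> frac_ideal R J \<longrightarrow> I \<subseteq> J \<longrightarrow> st I \<subseteq> st J) \<and>
     (\<forall>I. frac_ideal R I \<longrightarrow> st (st I) = st I)"

definition star_f :: "'k::field set \<Rightarrow> ('k set \<Rightarrow> 'k set) \<Rightarrow> 'k set \<Rightarrow> 'k set" where
  "star_f R st I = \<Union>{st J | J. J \<subseteq> I \<and> frac_ideal R J \<and> fin_gen R J}"

definition colon :: "'k::field set \<Rightarrow> 'k set \<Rightarrow> 'k set" where
  "colon R I = {x. \<forall>y\<in>I. x * y \<in> R}"

definition v_op :: "'k::field set \<Rightarrow> 'k set \<Rightarrow> 'k set" where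
  "v_op R I = colon R (colon R I)"

definition t_op :: "'k::field set \<Rightarrow> 'k set \<Rightarrow> 'k set" where
  "t_op R = star_f R (v_op R)"

definition star_reduction :: "'k::field set \<Rightarrow> ('k set \<Rightarrow> 'k set) \<Rightarrow> 'k set \<Rightarrow> 'k set \<Rightarrow> bool" where
  "star_reduction R st J I \<longleftrightarrow> ideal_of R J \<and> J \<noteq> {0} \<and> J \<subseteq> I \<and>
     (\<exists>n. st (ideal_mult R J (ideal_pow R I n)) = st (ideal_pow R I (Suc n)))"

definition star_basic :: "'k::field set \<Rightarrow> ('k set \<Rightarrow> 'k set) \<Rightarrow> 'k set \<Rightarrow> bool" where
  "star_basic R st I \<longleftrightarrow> (\<forall>J. star_reduction R st J I \<longrightarrow> st J = st I)"

end

theory Submission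
  imports Defs
begin

text \<open>Let J be a \<star>_f-reduction of a finitely generated ideal I, say
  (J I^n)^{\<star>_f} = (I^{n+1})^{\<star>_f}. The finitely many generators of I^{n+1} lie in
  (J I^n)^{\<star>_f}, hence in L^\<star> for a single finitely generated L \<subseteq> J I^n, and L involves
  only finitely many elements of J. So some finitely generated J_0 \<subseteq> J satisfies
  (J_0 I^n)^\<star> = (I^{n+1})^\<star>, i.e. J_0 is a \<star>-reduction of I. If I is \<star>-basic, then
  I^{\<star>_f} = I^\<star> = J_0^\<star> \<subseteq> J^{\<star>_f} \<subseteq> I^{\<star>_f}.\<close>

definition closure_op :: "'k::field set \<Rightarrow> ('k set \<Rightarrow> 'k set) \<Rightarrow> bool" where
  "closure_op R st \<longleftrightarrow> (\<forall>I. frac_ideal R I \<longrightarrow> frac_ideal R (st I)) \<and>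
     (\<forall>I. frac_ideal R I \<longrightarrow> I \<subseteq> st I) \<and>
     (\<forall>I J. frac_ideal R I \<longrightarrow> frac_ideal R J \<longrightarrow> I \<subseteq> J \<longrightarrow> st I \<subseteq> st J) \<and>
     (\<forall>I. frac_ideal R I \<longrightarrow> st (st I) = st I)"

lemma star_op_closure_op: "star_op R st \<Longrightarrow> closure_op R st"
  unfolding star_op_def closure_op_def by (elim conjE) (intro conjI; assumption)

lemma closure_op_frac_ideal: "closure_op R st \<Longrightarrow> frac_ideal R I \<Longrightarrow> frac_ideal R (st I)"
  unfolding closure_op_def by simp

lemma closure_op_extensive: "closure_op R st \<Longrightarrow> frac_ideal R I \<Longrightarrow> I \<subseteq> st I"
  unfolding closure_op_def by simp

lemma closure_op_mono:
  "closure_op R st \<Longrightarrow> frac_ideal R I \<Longrightarrow> frac_ideal R J \<Longrightarrow> I \<subseteq> J \<Longrightarrow> st I \<subseteq> st J"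
  unfolding closure_op_def by simp

lemma closure_op_idem: "closure_op R st \<Longrightarrow> frac_ideal R I \<Longrightarrow> st (st I) = st I"
  unfolding closure_op_def by simp

lemma closure_op_eq_if_between:
  assumes c: "closure_op R st" and Q: "frac_ideal R Q" and P: "frac_ideal R P"
    and "Q \<subseteq> P" and "P \<subseteq> st Q"
  shows "st P = st Q"
proof
  have "st P \<subseteq> st (st Q)"
    using closure_op_mono[OF c P closure_op_frac_ideal[OF c Q] \<open>P \<subseteq> st Q\<close>] .
  then show "st P \<subseteq> st Q" using closure_op_idem[OF c Q] by simp
  show "st Q \<subseteq> st P" using closure_op_mono[OF c Q P \<open>Q \<subseteq> P\<close>] .
qed

lemma domain_zero: "domain_with_qf R \<Longrightarrow> 0 \<in> R"
  and domain_one: "domain_with_qf R \<Longrightarrow> 1 \<in> R"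
  and domain_closed: "domain_with_qf R \<Longrightarrow> \<forall>x\<in>R. \<forall>y\<in>R. x + y \<in> R \<and> x - y \<in> R \<and> x * y \<in> R"
  unfolding domain_with_qf_def by (elim conjE, assumption)+

lemma domain_add: "domain_with_qf R \<Longrightarrow> x \<in> R \<Longrightarrow> y \<in> R \<Longrightarrow> x + y \<in> R"
  and domain_mult: "domain_with_qf R \<Longrightarrow> x \<in> R \<Longrightarrow> y \<in> R \<Longrightarrow> x * y \<in> R"
  using domain_closed by blast+

lemma submod_zero: "submod R M \<Longrightarrow> 0 \<in> M"
  and submod_add: "submod R M \<Longrightarrow> x \<in> M \<Longrightarrow> y \<in> M \<Longrightarrow> x + y \<in> M"
  and submod_mult: "submod R M \<Longrightarrow> r \<in> R \<Longrightarrow> x \<in> M \<Longrightarrow> r * x \<in> M"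
  unfolding submod_def by blast+

lemma submod_domain: "domain_with_qf R \<Longrightarrow> submod R R"
  unfolding submod_def using domain_zero domain_add domain_mult by blast

lemma frac_ideal_submod: "frac_ideal R I \<Longrightarrow> submod R I"
  and frac_ideal_nonzero: "frac_ideal R I \<Longrightarrow> I \<noteq> {0}"
  unfolding frac_ideal_def by blast+

lemma frac_ideal_of_ideal:
  assumes d: "domain_with_qf R" and "ideal_of R I" "I \<noteq> {0}"
  shows "frac_ideal R I"
  using assms domain_one[OF d] unfolding frac_ideal_def ideal_of_def
  by (intro conjI bexI[of _ 1]) auto

lemma ex_nonzero_mem: "submod R M \<Longrightarrow> M \<noteq> {0} \<Longrightarrow> \<exists>a\<in>M. a \<noteq> 0"
  unfolding submod_def by blast

lemma rspan_submod: "submod R (rspan R S)"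
  unfolding rspan_def submod_def by blast

lemma rspan_superset: "S \<subseteq> rspan R S"
  unfolding rspan_def by blast

lemma rspan_least: "submod R M \<Longrightarrow> S \<subseteq> M \<Longrightarrow> rspan R S \<subseteq> M"
  unfolding rspan_def by blast

lemma rspan_mono: "S \<subseteq> T \<Longrightarrow> rspan R S \<subseteq> rspan R T"
  unfolding rspan_def by blast

lemma rspan_empty: "rspan R {} = {0}"
proof -
  have "submod R {0}" unfolding submod_def by simp
  then have "rspan R {} \<subseteq> {0}" by (rule rspan_least) simp
  then show ?thesis using submod_zero[OF rspan_submod] by blast
qed

lemma rspan_one:
  assumes d: "domain_with_qf R"
  shows "rspan R {1} = R"
proof
  show "rspan R {1} \<subseteq> R" using d by (intro rspan_least submod_domain) (simp_all add: domain_one)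
  show "R \<subseteq> rspan R {1}"
  proof
    fix r assume "r \<in> R"
    then have "r * 1 \<in> rspan R {1}" using submod_mult[OF rspan_submod] rspan_superset by blast
    then show "r \<in> rspan R {1}" by simp
  qed
qed

lemma ideal_of_rspan: "ideal_of R I \<Longrightarrow> F \<subseteq> I \<Longrightarrow> ideal_of R (rspan R F)"
  unfolding ideal_of_def by (auto simp: rspan_submod dest: rspan_least)

lemma ideal_mult_submod: "submod R (ideal_mult R I J)"
  unfolding ideal_mult_def by (rule rspan_submod)

lemma ideal_mult_mem: "x \<in> I \<Longrightarrow> y \<in> J \<Longrightarrow> x * y \<in> ideal_mult R I J"
  unfolding ideal_mult_def by (rule subsetD[OF rspan_superset]) blast

lemma ideal_mult_mono: "I \<subseteq> I' \<Longrightarrow> J \<subseteq> J' \<Longrightarrow> ideal_mult R I J \<subseteq> ideal_mult R I' J'"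
  unfolding ideal_mult_def by (rule rspan_mono) blast

lemma ideal_mult_least:
  "submod R M \<Longrightarrow> (\<And>x y. x \<in> I \<Longrightarrow> y \<in> J \<Longrightarrow> x * y \<in> M) \<Longrightarrow> ideal_mult R I J \<subseteq> M"
  unfolding ideal_mult_def by (rule rspan_least) blast+

lemma ideal_of_ideal_mult:
  assumes d: "domain_with_qf R" and "ideal_of R I" "ideal_of R J"
  shows "ideal_of R (ideal_mult R I J)"
proof -
  have "ideal_mult R I J \<subseteq> R"
    using assms by (intro ideal_mult_least[OF submod_domain[OF d]])
      (auto simp: ideal_of_def intro: domain_mult[OF d])
  then show ?thesis by (simp add: ideal_of_def ideal_mult_submod)
qed

lemma ideal_mult_rspan:
  "ideal_mult R (rspan R F) (rspan R G) = rspan R {x * y | x y. x \<in> F \<and> y \<in> G}"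
proof
  let ?M = "rspan R {x * y | x y. x \<in> F \<and> y \<in> G}"
  have M: "submod R ?M" by (rule rspan_submod)
  have "f * y \<in> ?M" if f: "f \<in> F" and y: "y \<in> rspan R G" for f y
  proof -
    have "submod R {y. f * y \<in> ?M}"
      unfolding submod_def
    proof (intro conjI ballI; simp)
      show "0 \<in> ?M" by (rule submod_zero[OF M])
    next
      fix a b assume "f * a \<in> ?M" "f * b \<in> ?M"
      then show "f * (a + b) \<in> ?M" by (simp add: distrib_left submod_add[OF M])
    next
      fix r a assume "r \<in> R" "f * a \<in> ?M"
      then have "r * (f * a) \<in> ?M" by (rule submod_mult[OF M])
      then show "f * (r * a) \<in> ?M" by (simp add: mult.left_commute)
    qed
    moreover have "G \<subseteq> {y. f * y \<in> ?M}" using f by (auto intro: subsetD[OF rspan_superset])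
    ultimately have "rspan R G \<subseteq> {y. f * y \<in> ?M}" by (rule rspan_least)
    with y show ?thesis by blast
  qed
  then have "F \<subseteq> {x. \<forall>y\<in>rspan R G. x * y \<in> ?M}" by blast
  moreover have "submod R {x. \<forall>y\<in>rspan R G. x * y \<in> ?M}"
    unfolding submod_def
    by (simp add: distrib_right mult.assoc submod_zero[OF M] submod_add[OF M] submod_mult[OF M])
  ultimately have "rspan R F \<subseteq> {x. \<forall>y\<in>rspan R G. x * y \<in> ?M}" by (intro rspan_least)
  then show "ideal_mult R (rspan R F) (rspan R G) \<subseteq> ?M"
    by (intro ideal_mult_least[OF M]) blast
  have "{x * y | x y. x \<in> F \<and> y \<in> G} \<subseteq> ideal_mult R (rspan R F) (rspan R G)"
    by (auto intro!: ideal_mult_mem intro: subsetD[OF rspan_superset])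
  then show "?M \<subseteq> ideal_mult R (rspan R F) (rspan R G)" by (rule rspan_least[OF ideal_mult_submod])
qed

lemma fin_gen_ideal_mult:
  assumes "fin_gen R I" "fin_gen R J"
  shows "fin_gen R (ideal_mult R I J)"
proof -
  obtain F G where F: "finite F" "I = rspan R F" and G: "finite G" "J = rspan R G"
    using assms unfolding fin_gen_def by blast
  have "{x * y | x y. x \<in> F \<and> y \<in> G} = (\<lambda>(x, y). x * y) ` (F \<times> G)" by auto
  then have "finite {x * y | x y. x \<in> F \<and> y \<in> G}" using F(1) G(1) by simp
  then show ?thesis unfolding fin_gen_def F(2) G(2) ideal_mult_rspan by blast
qed

lemma fin_gen_ideal_pow:
  assumes d: "domain_with_qf R" and "fin_gen R I"
  shows "fin_gen R (ideal_pow R I n)"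
proof (induction n)
  case 0
  show ?case unfolding fin_gen_def using rspan_one[OF d] by (intro exI[of _ "{1}"]) simp
next
  case (Suc n)
  then show ?case using fin_gen_ideal_mult assms(2) by simp
qed

lemma ideal_of_ideal_pow:
  assumes d: "domain_with_qf R" and "ideal_of R I"
  shows "ideal_of R (ideal_pow R I n)"
proof (induction n)
  case 0
  show ?case using submod_domain[OF d] by (simp add: ideal_of_def)
next
  case (Suc n)
  then show ?case using ideal_of_ideal_mult[OF d assms(2)] by simp
qed

lemma power_mem_ideal_pow: "domain_with_qf R \<Longrightarrow> a \<in> I \<Longrightarrow> a ^ n \<in> ideal_pow R I n"
  by (induction n) (simp_all add: domain_one ideal_mult_mem)

lemma ideal_mult_rspan_union:
  "ideal_mult R (rspan R A) K \<subseteq> ideal_mult R (rspan R (A \<union> B)) K"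
  "ideal_mult R (rspan R B) K \<subseteq> ideal_mult R (rspan R (A \<union> B)) K"
  by (intro ideal_mult_mono rspan_mono; simp)+

lemma ideal_mult_finite_approx:
  assumes "x \<in> ideal_mult R J K"
  shows "\<exists>A. finite A \<and> A \<subseteq> J \<and> x \<in> ideal_mult R (rspan R A) K"
proof -
  let ?M = "{x. \<exists>A. finite A \<and> A \<subseteq> J \<and> x \<in> ideal_mult R (rspan R A) K}"
  have "submod R ?M"
    unfolding submod_def
  proof (intro conjI ballI)
    have "0 \<in> ideal_mult R (rspan R {}) K" by (rule submod_zero[OF ideal_mult_submod])
    then show "0 \<in> ?M" by blast
  next
    fix a b assume "a \<in> ?M" "b \<in> ?M"
    then obtain A B where A: "finite A" "A \<subseteq> J" "a \<in> ideal_mult R (rspan R A) K"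
      and B: "finite B" "B \<subseteq> J" "b \<in> ideal_mult R (rspan R B) K" by blast
    have "a + b \<in> ideal_mult R (rspan R (A \<union> B)) K"
      using A(3) B(3) ideal_mult_rspan_union[where A = A and B = B and K = K]
      by (intro submod_add[OF ideal_mult_submod]) blast+
    with A B show "a + b \<in> ?M" by (intro CollectI exI[of _ "A \<union> B"]) simp
  next
    fix r a assume "r \<in> R" "a \<in> ?M"
    then obtain A where A: "finite A" "A \<subseteq> J" "a \<in> ideal_mult R (rspan R A) K" by blast
    with \<open>r \<in> R\<close> have "r * a \<in> ideal_mult R (rspan R A) K" by (intro submod_mult[OF ideal_mult_submod])
    with A show "r * a \<in> ?M" by blast
  qed
  moreover have "a * b \<in> ?M" if "a \<in> J" "b \<in> K" for a b
  proof -
    have "a \<in> rspan R {a}" by (rule subsetD[OF rspan_superset]) simp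
    then have "a * b \<in> ideal_mult R (rspan R {a}) K" using \<open>b \<in> K\<close> by (rule ideal_mult_mem)
    with \<open>a \<in> J\<close> show ?thesis by blast
  qed
  ultimately have "ideal_mult R J K \<subseteq> ?M" by (rule ideal_mult_least)
  with assms show ?thesis by blast
qed

lemma finite_subset_ideal_mult:
  assumes "finite F" "F \<subseteq> ideal_mult R J K"
  shows "\<exists>A. finite A \<and> A \<subseteq> J \<and> F \<subseteq> ideal_mult R (rspan R A) K"
  using assms
proof (induction F rule: finite_induct)
  case empty
  show ?case by (intro exI[of _ "{}"]) simp
next
  case (insert x F)
  from insert.prems have "F \<subseteq> ideal_mult R J K" "x \<in> ideal_mult R J K" by simp_all
  then obtain A B where A: "finite A" "A \<subseteq> J" "F \<subseteq> ideal_mult R (rspan R A) K"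
    and B: "finite B" "B \<subseteq> J" "x \<in> ideal_mult R (rspan R B) K"
    using insert.IH ideal_mult_finite_approx by meson
  have "insert x F \<subseteq> ideal_mult R (rspan R (A \<union> B)) K"
    using A(3) B(3) ideal_mult_rspan_union[where A = A and B = B and K = K] by blast
  with A B show ?case by (intro exI[of _ "A \<union> B"]) simp
qed

lemma star_f_upper: "frac_ideal R L \<Longrightarrow> fin_gen R L \<Longrightarrow> L \<subseteq> I \<Longrightarrow> st L \<subseteq> star_f R st I"
  unfolding star_f_def by blast

lemma star_f_mono: "I \<subseteq> J \<Longrightarrow> star_f R st I \<subseteq> star_f R st J"
  unfolding star_f_def by blast

lemma star_f_fin_gen:
  assumes c: "closure_op R st" and I: "frac_ideal R I" "fin_gen R I"
  shows "star_f R st I = st I"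
proof
  show "st I \<subseteq> star_f R st I" using I by (rule star_f_upper) simp
  have "st L \<subseteq> st I" if "L \<subseteq> I" "frac_ideal R L" for L
    using closure_op_mono[OF c that(2) I(1) that(1)] .
  then show "star_f R st I \<subseteq> st I" unfolding star_f_def by blast
qed

text \<open>The sets L^\<star>, for finitely generated L \<subseteq> I, form a directed family with union I^{\<star>_f}.\<close>

lemma finite_subset_star_f:
  assumes d: "domain_with_qf R" and c: "closure_op R st" and I: "ideal_of R I"
    and "finite S" "S \<noteq> {}" "S \<subseteq> star_f R st I"
  shows "\<exists>L. L \<subseteq> I \<and> frac_ideal R L \<and> fin_gen R L \<and> S \<subseteq> st L"
  using \<open>finite S\<close> \<open>S \<noteq> {}\<close> \<open>S \<subseteq> star_f R st I\<close>
proof (induction S rule: finite_ne_induct)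
  case (singleton x)
  then show ?case unfolding star_f_def by blast
next
  case (insert x S)
  then obtain L1 where L1: "L1 \<subseteq> I" "frac_ideal R L1" "fin_gen R L1" "S \<subseteq> st L1" by auto
  from insert.prems obtain L2 where L2: "L2 \<subseteq> I" "frac_ideal R L2" "fin_gen R L2" "x \<in> st L2"
    unfolding star_f_def by blast
  obtain F1 F2 where F: "finite F1" "L1 = rspan R F1" "finite F2" "L2 = rspan R F2"
    using L1(3) L2(3) unfolding fin_gen_def by blast
  define L where "L = rspan R (F1 \<union> F2)"
  have sub: "L1 \<subseteq> L" "L2 \<subseteq> L" unfolding L_def F by (simp_all add: rspan_mono)
  have "F1 \<subseteq> L1" "F2 \<subseteq> L2" unfolding F by (simp_all add: rspan_superset)
  then have "F1 \<union> F2 \<subseteq> I" using L1(1) L2(1) by blast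
  then have "L \<subseteq> I" "ideal_of R L"
    unfolding L_def using I ideal_of_rspan[OF I] by (simp_all add: ideal_of_def rspan_least)
  moreover have "L \<noteq> {0}"
    using ex_nonzero_mem[OF frac_ideal_submod[OF L1(2)] frac_ideal_nonzero[OF L1(2)]] sub(1) by blast
  ultimately have L: "frac_ideal R L" by (simp add: frac_ideal_of_ideal[OF d])
  have "insert x S \<subseteq> st L"
    using closure_op_mono[OF c L1(2) L sub(1)] closure_op_mono[OF c L2(2) L sub(2)] L1(4) L2(4)
    by blast
  moreover have "fin_gen R L" unfolding L_def fin_gen_def using F by blast
  ultimately show ?case using \<open>L \<subseteq> I\<close> L by blast
qed

lemma ex_fin_gen_subideal_star_mult_eq:
  assumes d: "domain_with_qf R" and c: "closure_op R st"
    and J: "ideal_of R J" "j \<in> J" "j \<noteq> 0" and K: "ideal_of R K" "k \<in> K" "k \<noteq> 0"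
    and P: "frac_ideal R P" "fin_gen R P" "ideal_mult R J K \<subseteq> P"
      "P \<subseteq> star_f R st (ideal_mult R J K)"
  shows "\<exists>J\<^sub>0. J\<^sub>0 \<subseteq> J \<and> ideal_of R J\<^sub>0 \<and> j \<in> J\<^sub>0 \<and> fin_gen R J\<^sub>0 \<and>
    st (ideal_mult R J\<^sub>0 K) = st P"
proof -
  obtain G where G: "finite G" "P = rspan R G" using P(2) unfolding fin_gen_def by blast
  have "G \<noteq> {}" using G(2) frac_ideal_nonzero[OF P(1)] by (auto simp: rspan_empty)
  have "G \<subseteq> star_f R st (ideal_mult R J K)" using rspan_superset P(4) unfolding G(2) by (rule order_trans)
  then obtain L where L: "L \<subseteq> ideal_mult R J K" "frac_ideal R L" "fin_gen R L" "G \<subseteq> st L"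
    using finite_subset_star_f[OF d c ideal_of_ideal_mult[OF d J(1) K(1)] G(1) \<open>G \<noteq> {}\<close>] by blast
  obtain F where F: "finite F" "L = rspan R F" using L(3) unfolding fin_gen_def by blast
  have "F \<subseteq> ideal_mult R J K" using rspan_superset[of F R] L(1) unfolding F(2) by (rule order_trans)
  with F(1) obtain A where A: "finite A" "A \<subseteq> J" "F \<subseteq> ideal_mult R (rspan R A) K"
    using finite_subset_ideal_mult by meson
  define J\<^sub>0 where "J\<^sub>0 = rspan R (insert j A)"
  define Q where "Q = ideal_mult R J\<^sub>0 K"
  have "insert j A \<subseteq> J" using A(2) J(2) by blast
  then have J\<^sub>0: "J\<^sub>0 \<subseteq> J" "ideal_of R J\<^sub>0" "j \<in> J\<^sub>0" "fin_gen R J\<^sub>0"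
    unfolding J\<^sub>0_def fin_gen_def
    using J(1) ideal_of_rspan[OF J(1)] rspan_superset[of "insert j A" R] A(1)
    by (auto simp: ideal_of_def rspan_least)
  have "j * k \<in> Q" unfolding Q_def using J\<^sub>0(3) K(2) by (rule ideal_mult_mem)
  then have Q: "frac_ideal R Q"
    using ideal_of_ideal_mult[OF d J\<^sub>0(2) K(1)] J(3) K(3)
    by (auto simp: Q_def intro: frac_ideal_of_ideal[OF d])
  have "Q \<subseteq> P" unfolding Q_def using J\<^sub>0(1) P(3) by (meson ideal_mult_mono order_refl order_trans)
  have "ideal_mult R (rspan R A) K \<subseteq> Q"
    unfolding Q_def J\<^sub>0_def by (intro ideal_mult_mono rspan_mono) auto
  then have "L \<subseteq> Q" unfolding F(2) using A(3) by (intro rspan_least[OF frac_ideal_submod[OF Q]]) auto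
  then have "G \<subseteq> st Q" using closure_op_mono[OF c L(2) Q] L(4) by blast
  then have "P \<subseteq> st Q"
    unfolding G(2) by (rule rspan_least[OF frac_ideal_submod[OF closure_op_frac_ideal[OF c Q]]])
  then have "st Q = st P" using closure_op_eq_if_between[OF c Q P(1) \<open>Q \<subseteq> P\<close>] by simp
  with J\<^sub>0 show ?thesis unfolding Q_def by blast
qed

lemma fin_gen_star_reduction_of_star_f_reduction:
  assumes d: "domain_with_qf R" and c: "closure_op R st"
    and I: "ideal_of R I" "fin_gen R I" and red: "star_reduction R (star_f R st) J I"
  shows "\<exists>J\<^sub>0. J\<^sub>0 \<subseteq> J \<and> frac_ideal R J\<^sub>0 \<and> fin_gen R J\<^sub>0 \<and> star_reduction R st J\<^sub>0 I"
proof -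
  from red obtain n where J: "ideal_of R J" "J \<noteq> {0}" "J \<subseteq> I"
    and eq: "star_f R st (ideal_mult R J (ideal_pow R I n)) = star_f R st (ideal_pow R I (Suc n))"
    unfolding star_reduction_def by blast
  define K where "K = ideal_pow R I n"
  define P where "P = ideal_pow R I (Suc n)"
  obtain j where j: "j \<in> J" "j \<noteq> 0" using ex_nonzero_mem J(1,2) unfolding ideal_of_def by blast
  have "j \<in> I" using j(1) J(3) by blast
  have K: "ideal_of R K" "j ^ n \<in> K" "j ^ n \<noteq> 0"
    unfolding K_def using ideal_of_ideal_pow[OF d I(1)] power_mem_ideal_pow[OF d \<open>j \<in> I\<close>] j(2)
    by simp_all
  have "ideal_of R P" "j ^ Suc n \<in> P"
    unfolding P_def using ideal_of_ideal_pow[OF d I(1)] power_mem_ideal_pow[OF d \<open>j \<in> I\<close>] .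
  then have P: "frac_ideal R P" using j(2) by (auto intro: frac_ideal_of_ideal[OF d])
  have "fin_gen R P" unfolding P_def using fin_gen_ideal_pow[OF d I(2)] .
  have "ideal_mult R J K \<subseteq> P" unfolding K_def P_def using J(3) by (simp add: ideal_mult_mono)
  have "P \<subseteq> star_f R st P" using closure_op_extensive[OF c P] star_f_fin_gen[OF c P \<open>fin_gen R P\<close>] by simp
  also have "\<dots> = star_f R st (ideal_mult R J K)" unfolding K_def P_def eq ..
  finally obtain J\<^sub>0 where J\<^sub>0: "J\<^sub>0 \<subseteq> J" "ideal_of R J\<^sub>0" "j \<in> J\<^sub>0" "fin_gen R J\<^sub>0"
    "st (ideal_mult R J\<^sub>0 K) = st P"
    using ex_fin_gen_subideal_star_mult_eq[OF d c J(1) j K P \<open>fin_gen R P\<close> \<open>ideal_mult R J K \<subseteq> P\<close>]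
    by blast
  have "frac_ideal R J\<^sub>0" using J\<^sub>0(2,3) j(2) by (auto intro: frac_ideal_of_ideal[OF d])
  moreover have "star_reduction R st J\<^sub>0 I"
    unfolding star_reduction_def using J\<^sub>0 j(2) J(3) unfolding K_def P_def by blast
  ultimately show ?thesis using J\<^sub>0 by blast
qed

lemma star_f_basic_if_star_basic:
  assumes d: "domain_with_qf R" and c: "closure_op R st"
    and basic: "\<forall>I. ideal_of R I \<and> I \<noteq> {0} \<and> fin_gen R I \<longrightarrow> star_basic R st I"
    and I: "ideal_of R I" "fin_gen R I"
  shows "star_basic R (star_f R st) I"
  unfolding star_basic_def
proof (intro allI impI)
  fix J assume red: "star_reduction R (star_f R st) J I"
  then obtain J\<^sub>0 where J\<^sub>0: "J\<^sub>0 \<subseteq> J" "frac_ideal R J\<^sub>0" "fin_gen R J\<^sub>0" "star_reduction R st J\<^sub>0 I"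
    using fin_gen_star_reduction_of_star_f_reduction[OF d c I] by blast
  from red have "ideal_of R J" "J \<noteq> {0}" "J \<subseteq> I" unfolding star_reduction_def by auto
  then have "I \<noteq> {0}" using ex_nonzero_mem[of R J] unfolding ideal_of_def by blast
  then have "st J\<^sub>0 = st I" using basic I J\<^sub>0(4) unfolding star_basic_def by blast
  moreover have "star_f R st I = st I"
    using star_f_fin_gen[OF c frac_ideal_of_ideal[OF d I(1) \<open>I \<noteq> {0}\<close>] I(2)] .
  moreover have "st J\<^sub>0 \<subseteq> star_f R st J" using star_f_upper[OF J\<^sub>0(2,3,1)] .
  ultimately show "star_f R st J = star_f R st I" using star_f_mono[OF \<open>J \<subseteq> I\<close>] by blast
qed

lemma colon_submod: "domain_with_qf R \<Longrightarrow> submod R (colon R X)"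
  unfolding submod_def colon_def
  by (auto simp: distrib_right mult.assoc domain_zero domain_add domain_mult)

lemma subset_colon_colon: "X \<subseteq> colon R (colon R X)"
  unfolding colon_def by (auto simp: mult.commute)

lemma colon_antimono: "X \<subseteq> Y \<Longrightarrow> colon R Y \<subseteq> colon R X"
  unfolding colon_def by auto

lemma v_op_closure_op:
  assumes d: "domain_with_qf R"
  shows "closure_op R (v_op R)"
  unfolding closure_op_def v_op_def
proof (intro conjI allI impI)
  fix I assume I: "frac_ideal R I"
  then obtain e where e: "e \<in> R" "e \<noteq> 0" "\<forall>x\<in>I. e * x \<in> R" unfolding frac_ideal_def by blast
  then have "e \<in> colon R I" unfolding colon_def by (auto simp: mult.commute)
  then have "\<forall>z\<in>colon R (colon R I). e * z \<in> R" unfolding colon_def by (auto simp: mult.commute)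
  moreover have "colon R (colon R I) \<noteq> {0}"
    using I subset_colon_colon[of I R] frac_ideal_submod ex_nonzero_mem frac_ideal_nonzero by blast
  ultimately show "frac_ideal R (colon R (colon R I))"
    unfolding frac_ideal_def using colon_submod[OF d] e by blast
  show "colon R (colon R (colon R (colon R I))) = colon R (colon R I)"
    by (metis colon_antimono subset_colon_colon subset_antisym)
next
  show "I \<subseteq> colon R (colon R I)" for I by (rule subset_colon_colon)
next
  show "colon R (colon R I) \<subseteq> colon R (colon R J)" if "I \<subseteq> J" for I J
    using that by (intro colon_antimono)
qed

theorem proposition1p8:
  fixes R :: "'k::field set" and st :: "'k set \<Rightarrow> 'k set"
  assumes "domain_with_qf R" and "star_op R st"
  shows "((\<forall>I. ideal_of R I \<and> I \<noteq> {0} \<and> fin_gen R I \<longrightarrow> star_basic R st I) \<longrightarrow>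
          (\<forall>I. ideal_of R I \<and> I \<noteq> {0} \<and> fin_gen R I \<longrightarrow> star_basic R (star_f R st) I))
       \<and> ((\<forall>I. ideal_of R I \<and> I \<noteq> {0} \<and> fin_gen R I \<longrightarrow> star_basic R (v_op R) I) \<longrightarrow>
          (\<forall>I. ideal_of R I \<and> I \<noteq> {0} \<and> fin_gen R I \<longrightarrow> star_basic R (t_op R) I))"
  using star_f_basic_if_star_basic[OF assms(1) star_op_closure_op[OF assms(2)]]
    star_f_basic_if_star_basic[OF assms(1) v_op_closure_op[OF assms(1)]]
  unfolding t_op_def by blast

end
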